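(* Let $T$ be a Boolean algebra (with order $\le$, meet $\land$, join $\lor$ and complement $\neg$), and let $(a,g)$ and $(a',g')$ be contracts over $T$. Let $\mathcal{C}_c=(a_c,g_c)$ be their composition, given by $$a_c=(a\land a')\lor(a\land\neg g)\lor(a'\land\neg g'),\qquad g_c=(g\lor\neg a)\land(g'\lor\neg a').$$ Suppose that $a''\in T$ satisfies $a''\land g\land a\le a'\land g\land a$ and that $g''\in T$ satisfies $g\land g'\le g''$. Then the contract $(a\land a'',\,g'')$ is a relaxation of $\mathcal{C}_c$, i.e. $\mathcal{C}_c\le (a\land a'',g'')$.
   Context: A contract over a Boolean algebra $T$ (the "term algebra") is a pair $(a,g)$ of elements of $T$, called assumptions and guarantees. Contracts are ordered by refinement: for contracts $\mathcal{C}=(a,g)$ and $\mathcal{C}'=(a',g')$, $\mathcal{C}\le\mathcal{C}'$ (read "$\mathcal{C}$ refines $\mathcal{C}'$", or "$\mathcal{C}'$ is a relaxation of $\mathcal{C}$") holds iff $a'\le a$ and $g\lor\neg a\le g'\lor\neg a'$. *)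

theory Defs
  imports Main
begin

text \<open>Contracts over a Boolean algebra: pairs (assumptions, guarantees).
  Refinement: (a,g) refines (a',g') iff a' <= a and g \<squnion> -a <= g' \<squnion> -a'.\<close>

type_synonym 'a contract = "'a \<times> 'a"

definition refines :: "'a::boolean_algebra contract \<Rightarrow> 'a contract \<Rightarrow> bool" where
  "refines C C' \<longleftrightarrow> fst C' \<le> fst C \<and> sup (snd C) (- fst C) \<le> sup (snd C') (- fst C')"

definition composition :: "'a::boolean_algebra contract \<Rightarrow> 'a contract \<Rightarrow> 'a contract" where
  "composition C C' =
     (let a = fst C; g = snd C; a' = fst C'; g' = snd C' in
      (sup (sup (inf a a') (inf a (- g))) (inf a' (- g')),
       inf (sup g (- a)) (sup g' (- a'))))"

end

theory Submission
  imports Defs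
begin

text \<open>Refinement towards a contract with smaller assumptions only has to be checked inside those
  assumptions: (a, g) refines (b, h) iff b \<le> a and b \<sqinter> g \<le> h. Splitting
  a \<sqinter> a'' along g, the part inside g lies below a \<sqinter> a' by the hypothesis on a''
  and the part outside g lies below a \<sqinter> -g, so a \<sqinter> a'' lies below the composed
  assumption. Inside a \<sqinter> a'' the composed guarantee reduces to g \<sqinter> (g' \<squnion> -a'), and
  since a'' \<sqinter> g \<sqinter> a already lies below a', this is below g \<sqinter> g' \<le> g''.\<close>

lemma refines_iff:
  fixes a g b h :: "'a::boolean_algebra"
  shows "refines (a, g) (b, h) \<longleftrightarrow> b \<le> a \<and> inf b g \<le> h"
proof (cases "b \<le> a")
  case True
  then have "inf b (- a) = bot"
    by (simp add: inf_shunt)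
  then have "inf b (sup g (- a)) = inf b g"
    by (simp add: inf_sup_distrib1)
  moreover have "sup g (- a) \<le> sup h (- b) \<longleftrightarrow> inf b (sup g (- a)) \<le> h"
    by (metis shunt1 inf_commute sup_commute)
  ultimately show ?thesis
    using True by (simp add: refines_def)
qed (simp add: refines_def)

lemma le_composition_assumption:
  fixes a g a' g' a'' :: "'a::boolean_algebra"
  assumes "inf (inf a'' g) a \<le> inf (inf a' g) a"
  shows "inf a a'' \<le> fst (composition (a, g) (a', g'))"
proof -
  have "inf (inf a a'') g \<le> inf a a'"
    using assms by (simp add: inf_aci le_infI2)
  moreover have "inf (inf a a'') (- g) \<le> inf a (- g)"
    by (simp add: le_infI1)
  moreover have "inf a a'' = sup (inf (inf a a'') g) (inf (inf a a'') (- g))"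
    by (simp add: inf_sup_distrib1[symmetric])
  ultimately have "inf a a'' \<le> sup (inf a a') (inf a (- g))"
    by (metis sup_mono)
  then show ?thesis
    by (simp add: composition_def le_supI1)
qed

lemma inf_composition_guarantee_le:
  fixes a g a' g' a'' :: "'a::boolean_algebra"
  assumes "inf (inf a'' g) a \<le> inf (inf a' g) a"
  shows "inf (inf a a'') (snd (composition (a, g) (a', g'))) \<le> inf g g'"
proof -
  have "inf (inf a a'') (snd (composition (a, g) (a', g')))
      = inf (inf (inf a'' g) a) (sup g' (- a'))"
    by (simp add: composition_def inf_sup_distrib1 inf_sup_distrib2 inf_aci)
  also have "\<dots> \<le> inf (inf a' g) (sup g' (- a'))"
    using assms by (blast intro: inf_mono order_trans inf_le1)
  also have "\<dots> = inf (inf a' g) g'"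
    by (simp add: inf_sup_distrib1 inf_aci)
  also have "\<dots> \<le> inf g g'"
    by (simp add: inf_aci le_infI2)
  finally show ?thesis .
qed

theorem theorem1:
  fixes a g a' g' a'' g'' :: "'a::boolean_algebra"
  assumes "inf (inf a'' g) a \<le> inf (inf a' g) a"
    and "inf g g' \<le> g''"
  shows "refines (composition (a, g) (a', g')) (inf a a'', g'')"
proof -
  have "inf (inf a a'') (snd (composition (a, g) (a', g'))) \<le> g''"
    using inf_composition_guarantee_le[OF assms(1)] assms(2) by (rule order_trans)
  then show ?thesis
    using le_composition_assumption[OF assms(1)]
    by (metis prod.collapse refines_iff)
qed

end
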